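(* Let $u_1,\dots,u_n,v_1,\dots,v_n$ be i.i.d. $\mathcal N(0,I_d/d)$ in $\mathbb R^d$, $U=[u_1\cdots u_n]$, $V=[v_1\cdots v_n]$, and suppose $n\ge c\,d^2/\log d$ for a fixed $c>0$. For any fixed $\epsilon>0$, with probability $1-e^{-\Omega(d)}$ (for all sufficiently large $d$), $\|UV^\top\|_{F}\le(1+\epsilon)\sqrt n$.
   Context: $\|\cdot\|_F$ is the Frobenius norm. *)

theory Defs
  imports "HOL-Probability.Probability"
begin

text \<open>Index set for the entries of U and V (both d x n):
  (False, i, k) is the i-th coordinate of u_k, i.e. U i k;
  (True, j, k) is the j-th coordinate of v_k, i.e. V j k.\<close>
definition gidx :: "nat \<Rightarrow> nat \<Rightarrow> (bool \<times> nat \<times> nat) set" where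
  "gidx d n = UNIV \<times> {..<d} \<times> {..<n}"

text \<open>Joint law of u_1..u_n, v_1..v_n i.i.d. N(0, I_d/d): all 2dn coordinates
  are i.i.d. real normal with mean 0 and variance 1/d (standard deviation 1/sqrt d).\<close>
definition gauss_UV :: "nat \<Rightarrow> nat \<Rightarrow> ((bool \<times> nat \<times> nat) \<Rightarrow> real) measure" where
  "gauss_UV d n = PiM (gidx d n) (\<lambda>_. density lborel (normal_density 0 (1 / sqrt (real d))))"

definition matU :: "((bool \<times> nat \<times> nat) \<Rightarrow> real) \<Rightarrow> nat \<Rightarrow> nat \<Rightarrow> real" where
  "matU x i k = x (False, i, k)"

definition matV :: "((bool \<times> nat \<times> nat) \<Rightarrow> real) \<Rightarrow> nat \<Rightarrow> nat \<Rightarrow> real" where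
  "matV x j k = x (True, j, k)"

definition frob_UVt :: "nat \<Rightarrow> nat \<Rightarrow> ((bool \<times> nat \<times> nat) \<Rightarrow> real) \<Rightarrow> real" where
  "frob_UVt d n x = sqrt (\<Sum>i<d. \<Sum>j<d. (\<Sum>k<n. matU x i k * matV x j k)\<^sup>2)"

end

theory Submission
  imports Defs
begin

(*
  Write S = frob_sq_UVt d n x for the squared Frobenius norm of U V^T, and view U and V as
  d x n matrices with rows u_i and v_j, so that S = sum over i, j of <u_i, v_j>^2.  By convexity of
  exp, exp (l S) is at most the product over j of the averages (1 / d) sum_i exp (d l <u_i, v_j>^2),
  and the j-th factor only involves the row v_j.  For fixed U the rows of V are independent
  Gaussian vectors and E exp (d l <u_i, v_j>^2) = (1 - 2 l |u_i|^2)^(-1/2).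
  Hence on the event that every |u_i|^2 is at most r = (1 + e) n / d, a Chernoff bound gives
  P (S > (1 + e)^2 n) <= exp (- d e^2 / 16).  Each |u_i|^2 is a scaled chi-square variable and
  exceeds r with probability at most exp (- n e^2 / 16); the hypothesis n >= c d^2 / ln d makes
  the union bound d exp (- n e^2 / 16) exponentially small in d as well.
*)

abbreviation normal_measure :: "real \<Rightarrow> real measure" where
  "normal_measure \<sigma> \<equiv> density lborel (normal_density 0 \<sigma>)"

lemma nn_integral_normal_measure_by_density:
  assumes "g \<in> borel_measurable borel" "0 < \<tau>" "0 \<le> C" "\<And>x. 0 \<le> g x"
    and "\<And>x. normal_density 0 \<sigma> x * g x = C * normal_density m \<tau> x"
  shows "(\<integral>\<^sup>+x. ennreal (g x) \<partial>normal_measure \<sigma>) = ennreal C"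
proof -
  have "(\<integral>\<^sup>+x. ennreal (g x) \<partial>normal_measure \<sigma>)
      = (\<integral>\<^sup>+x. ennreal (normal_density 0 \<sigma> x) * ennreal (g x) \<partial>lborel)"
    using assms(1) by (subst nn_integral_density) auto
  also have "\<dots> = (\<integral>\<^sup>+x. ennreal C * ennreal (normal_density m \<tau> x) \<partial>lborel)"
    using assms by (intro nn_integral_cong) (simp flip: ennreal_mult)
  also have "\<dots> = ennreal C"
    using assms(2) by (simp add: nn_integral_cmult nn_integral_eq_integral)
  finally show ?thesis .
qed

lemma nn_integral_normal_exp_linear:
  assumes "0 < \<sigma>"
  shows "(\<integral>\<^sup>+x. ennreal (exp (t * x)) \<partial>normal_measure \<sigma>) = ennreal (exp (t\<^sup>2 * \<sigma>\<^sup>2 / 2))"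
proof (rule nn_integral_normal_measure_by_density[where m = "t * \<sigma>\<^sup>2"])
  fix x
  have "- (x - 0)\<^sup>2 / (2 * \<sigma>\<^sup>2) + t * x = t\<^sup>2 * \<sigma>\<^sup>2 / 2 + - (x - t * \<sigma>\<^sup>2)\<^sup>2 / (2 * \<sigma>\<^sup>2)"
    using assms by (simp add: field_simps power2_eq_square)
  then show "normal_density 0 \<sigma> x * exp (t * x) = exp (t\<^sup>2 * \<sigma>\<^sup>2 / 2) * normal_density (t * \<sigma>\<^sup>2) \<sigma> x"
    unfolding normal_density_def by (simp add: exp_add[symmetric] mult_ac)
qed (use assms in auto)

lemma nn_integral_normal_exp_square:
  assumes "0 < \<sigma>" and "2 * \<mu> * \<sigma>\<^sup>2 < 1"
  shows "(\<integral>\<^sup>+x. ennreal (exp (\<mu> * x\<^sup>2)) \<partial>normal_measure \<sigma>) = ennreal (1 / sqrt (1 - 2 * \<mu> * \<sigma>\<^sup>2))"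
proof -
  define q where "q = 1 - 2 * \<mu> * \<sigma>\<^sup>2"
  have q: "0 < q" using assms by (simp add: q_def)
  define \<tau> where "\<tau> = \<sigma> / sqrt q"
  have \<tau>2: "\<tau>\<^sup>2 = \<sigma>\<^sup>2 / q" using q by (simp add: \<tau>_def power_divide)
  have "(\<integral>\<^sup>+x. ennreal (exp (\<mu> * x\<^sup>2)) \<partial>normal_measure \<sigma>) = ennreal (1 / sqrt q)"
  proof (rule nn_integral_normal_measure_by_density[where m = 0 and \<tau> = \<tau>])
    fix x
    have "- (x - 0)\<^sup>2 / (2 * \<sigma>\<^sup>2) + \<mu> * x\<^sup>2 = - (x - 0)\<^sup>2 / (2 * \<tau>\<^sup>2)"
      using assms q unfolding \<tau>2 q_def by (simp add: field_simps power2_eq_square)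
    moreover have "1 / sqrt (2 * pi * \<sigma>\<^sup>2) = 1 / sqrt q * (1 / sqrt (2 * pi * \<tau>\<^sup>2))"
      using assms q unfolding \<tau>2 by (simp add: real_sqrt_divide real_sqrt_mult field_simps)
    ultimately show "normal_density 0 \<sigma> x * exp (\<mu> * x\<^sup>2) = 1 / sqrt q * normal_density 0 \<tau> x"
      unfolding normal_density_def by (simp add: exp_add[symmetric])
  qed (use assms q in \<open>auto simp: \<tau>_def\<close>)
  then show ?thesis by (simp add: q_def)
qed

lemma product_sigma_finite_normal_measure:
  assumes "0 < \<sigma>"
  shows "product_sigma_finite (\<lambda>_. normal_measure \<sigma>)"
proof -
  interpret prob_space "normal_measure \<sigma>" using assms by (rule prob_space_normal_density)
  show ?thesis by unfold_locales
qed

lemma prob_space_PiM_normal_measure: "0 < \<sigma> \<Longrightarrow> prob_space (PiM I (\<lambda>_. normal_measure \<sigma>))"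
  by (intro prob_space_PiM prob_space_normal_density)

text \<open>Stated for every index, not only for those in \<open>I\<close>, so that the measurability prover
  also handles coordinates whose index is a bound variable of a sum.\<close>
lemma measurable_component_PiM_normal_measure [measurable]:
  "(\<lambda>x. x \<iota>) \<in> borel_measurable (PiM I (\<lambda>_. normal_measure \<sigma>))"
proof (cases "\<iota> \<in> I")
  case True
  then show ?thesis
    using measurable_component_singleton[of \<iota> I "\<lambda>_. normal_measure \<sigma>"] by simp
next
  case False
  then have "\<And>x. x \<in> space (PiM I (\<lambda>_. normal_measure \<sigma>)) \<Longrightarrow> x \<iota> = undefined"
    by (auto simp: space_PiM)
  then show ?thesis
    by (subst measurable_cong[where g = "\<lambda>_. undefined"]) auto
qed

lemma nn_integral_PiM_normal_exp_linear:
  fixes a :: "'i \<Rightarrow> real"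
  assumes "finite J" and "0 < \<sigma>"
  shows "(\<integral>\<^sup>+y. ennreal (exp (t * (\<Sum>\<iota>\<in>J. a \<iota> * y \<iota>))) \<partial>PiM J (\<lambda>_. normal_measure \<sigma>))
       = ennreal (exp (t\<^sup>2 * \<sigma>\<^sup>2 * (\<Sum>\<iota>\<in>J. (a \<iota>)\<^sup>2) / 2))"
proof -
  interpret product_sigma_finite "\<lambda>_. normal_measure \<sigma>"
    using assms(2) by (rule product_sigma_finite_normal_measure)
  have "(\<integral>\<^sup>+y. ennreal (exp (t * (\<Sum>\<iota>\<in>J. a \<iota> * y \<iota>))) \<partial>PiM J (\<lambda>_. normal_measure \<sigma>))
      = (\<integral>\<^sup>+y. (\<Prod>\<iota>\<in>J. ennreal (exp ((t * a \<iota>) * y \<iota>))) \<partial>PiM J (\<lambda>_. normal_measure \<sigma>))"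
    using assms(1)
    by (intro nn_integral_cong) (simp add: prod_ennreal exp_sum[symmetric] sum_distrib_left mult_ac)
  also have "\<dots> = (\<Prod>\<iota>\<in>J. \<integral>\<^sup>+x. ennreal (exp ((t * a \<iota>) * x)) \<partial>normal_measure \<sigma>)"
    using assms(1) by (rule product_nn_integral_prod) simp
  also have "\<dots> = (\<Prod>\<iota>\<in>J. ennreal (exp ((t * a \<iota>)\<^sup>2 * \<sigma>\<^sup>2 / 2)))"
    using assms(2) by (simp add: nn_integral_normal_exp_linear)
  also have "\<dots> = ennreal (exp (t\<^sup>2 * \<sigma>\<^sup>2 * (\<Sum>\<iota>\<in>J. (a \<iota>)\<^sup>2) / 2))"
    using assms(1)
    by (simp add: prod_ennreal exp_sum[symmetric] sum_distrib_left sum_divide_distrib power_mult_distrib mult_ac)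
  finally show ?thesis .
qed

text \<open>Hubbard-Stratonovich: \<open>exp (\<mu> z\<^sup>2)\<close> is the standard Gaussian moment generating function
  at \<open>sqrt (2 \<mu>) z\<close>, so by Fubini the square of a linear form reduces to linear forms.\<close>
lemma nn_integral_PiM_normal_exp_square_linear:
  fixes a :: "'i \<Rightarrow> real"
  assumes "finite J" and "0 < \<sigma>" and "0 \<le> \<mu>" and "2 * \<mu> * \<sigma>\<^sup>2 * (\<Sum>\<iota>\<in>J. (a \<iota>)\<^sup>2) < 1"
  shows "(\<integral>\<^sup>+y. ennreal (exp (\<mu> * (\<Sum>\<iota>\<in>J. a \<iota> * y \<iota>)\<^sup>2)) \<partial>PiM J (\<lambda>_. normal_measure \<sigma>))
       = ennreal (1 / sqrt (1 - 2 * \<mu> * \<sigma>\<^sup>2 * (\<Sum>\<iota>\<in>J. (a \<iota>)\<^sup>2)))"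
proof -
  define P where "P = PiM J (\<lambda>_. normal_measure \<sigma>)"
  define s where "s = sqrt (2 * \<mu>)"
  have s2: "s\<^sup>2 = 2 * \<mu>" using assms(3) by (simp add: s_def)
  interpret pair_sigma_finite P "normal_measure 1"
    unfolding P_def using assms(2)
    by (intro pair_sigma_finite.intro prob_space_imp_sigma_finite prob_space_PiM_normal_measure
        prob_space_normal_density) auto
  have hs: "(\<integral>\<^sup>+h. ennreal (exp (s * h * z)) \<partial>normal_measure 1) = ennreal (exp (\<mu> * z\<^sup>2))" for z
    using nn_integral_normal_exp_linear[of 1 "s * z"] by (simp add: mult_ac power_mult_distrib s2)
  have "(\<integral>\<^sup>+y. ennreal (exp (\<mu> * (\<Sum>\<iota>\<in>J. a \<iota> * y \<iota>)\<^sup>2)) \<partial>P)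
      = (\<integral>\<^sup>+y. (\<integral>\<^sup>+h. ennreal (exp (s * h * (\<Sum>\<iota>\<in>J. a \<iota> * y \<iota>))) \<partial>normal_measure 1) \<partial>P)"
    by (simp add: hs)
  also have "\<dots> = (\<integral>\<^sup>+h. (\<integral>\<^sup>+y. ennreal (exp (s * h * (\<Sum>\<iota>\<in>J. a \<iota> * y \<iota>))) \<partial>P) \<partial>normal_measure 1)"
    by (rule Fubini'[symmetric]) (simp add: P_def)
  also have "\<dots> = (\<integral>\<^sup>+h. ennreal (exp ((\<mu> * \<sigma>\<^sup>2 * (\<Sum>\<iota>\<in>J. (a \<iota>)\<^sup>2)) * h\<^sup>2)) \<partial>normal_measure 1)"
    using nn_integral_PiM_normal_exp_linear[OF assms(1,2), of "s * _" a]
    by (simp add: P_def power_mult_distrib s2 mult_ac)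
  also have "\<dots> = ennreal (1 / sqrt (1 - 2 * \<mu> * \<sigma>\<^sup>2 * (\<Sum>\<iota>\<in>J. (a \<iota>)\<^sup>2)))"
    using assms(4) by (subst nn_integral_normal_exp_square) (auto simp: mult_ac)
  finally show ?thesis unfolding P_def .
qed

lemma nn_integral_PiM_normal_exp_sum_squares:
  assumes "finite I" and "R \<subseteq> I" and "0 < \<sigma>" and "2 * \<mu> * \<sigma>\<^sup>2 < 1"
  shows "(\<integral>\<^sup>+x. ennreal (exp (\<mu> * (\<Sum>\<iota>\<in>R. (x \<iota>)\<^sup>2))) \<partial>PiM I (\<lambda>_. normal_measure \<sigma>))
       = ennreal ((1 / sqrt (1 - 2 * \<mu> * \<sigma>\<^sup>2)) ^ card R)"
proof -
  interpret product_sigma_finite "\<lambda>_. normal_measure \<sigma>"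
    using assms(3) by (rule product_sigma_finite_normal_measure)
  interpret prob_space "normal_measure \<sigma>"
    using assms(3) by (rule prob_space_normal_density)
  define g where "g = (\<lambda>\<iota> z. if \<iota> \<in> R then ennreal (exp (\<mu> * z\<^sup>2)) else 1)"
  have fin: "finite R" using assms(1,2) by (rule finite_subset[rotated])
  have restrict_R: "(\<Prod>\<iota>\<in>I. f \<iota>) = (\<Prod>\<iota>\<in>R. f \<iota>)"
    if "\<And>\<iota>. \<iota> \<notin> R \<Longrightarrow> f \<iota> = 1" for f :: "_ \<Rightarrow> ennreal"
    using assms(1,2) that by (intro prod.mono_neutral_right) auto
  have "(\<integral>\<^sup>+x. ennreal (exp (\<mu> * (\<Sum>\<iota>\<in>R. (x \<iota>)\<^sup>2))) \<partial>PiM I (\<lambda>_. normal_measure \<sigma>))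
      = (\<integral>\<^sup>+x. (\<Prod>\<iota>\<in>I. g \<iota> (x \<iota>)) \<partial>PiM I (\<lambda>_. normal_measure \<sigma>))"
    using fin by (intro nn_integral_cong) (simp add: restrict_R g_def prod_ennreal exp_sum sum_distrib_left)
  also have "\<dots> = (\<Prod>\<iota>\<in>I. integral\<^sup>N (normal_measure \<sigma>) (g \<iota>))"
    using assms(1) by (rule product_nn_integral_prod) (simp add: g_def)
  also have "\<dots> = (\<Prod>\<iota>\<in>R. integral\<^sup>N (normal_measure \<sigma>) (g \<iota>))"
    by (rule restrict_R) (use emeasure_space_1 in \<open>simp add: g_def\<close>)
  also have "\<dots> = (\<Prod>\<iota>\<in>R. ennreal (1 / sqrt (1 - 2 * \<mu> * \<sigma>\<^sup>2)))"
    using assms(3,4) by (intro prod.cong) (simp_all add: g_def nn_integral_normal_exp_square)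
  also have "\<dots> = ennreal ((1 / sqrt (1 - 2 * \<mu> * \<sigma>\<^sup>2)) ^ card R)"
    using assms(4) by (simp add: ennreal_power)
  finally show ?thesis .
qed

lemma nn_integral_PiM_prod_blocks:
  fixes M :: "'i \<Rightarrow> 'a measure" and J :: "'t \<Rightarrow> 'i set"
  assumes "product_sigma_finite M"
    and "finite T" and "\<And>t. t \<in> T \<Longrightarrow> finite (J t)" and "disjoint_family_on J T"
    and "\<And>t. t \<in> T \<Longrightarrow> f t \<in> borel_measurable (PiM (J t) M)"
  shows "(\<integral>\<^sup>+x. (\<Prod>t\<in>T. f t (restrict x (J t))) \<partial>PiM (\<Union>t\<in>T. J t) M)
       = (\<Prod>t\<in>T. integral\<^sup>N (PiM (J t) M) (f t))"
  using assms(2-)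
proof (induction T rule: finite_induct)
  case empty
  then show ?case by (simp add: PiM_empty)
next
  case (insert t T)
  interpret product_sigma_finite M by (rule assms(1))
  define I where "I = (\<Union>s\<in>T. J s)"
  have U: "(\<Union>s\<in>insert t T. J s) = I \<union> J t" by (auto simp: I_def)
  have disj: "I \<inter> J t = {}"
    using insert.prems(2) insert.hyps(2) unfolding I_def disjoint_family_on_def by fastforce
  have fin: "finite I" "finite (J t)" using insert.prems(1) insert.hyps(1) by (auto simp: I_def)
  have meas: "(\<lambda>x. f s (restrict x (J s))) \<in> borel_measurable (PiM K M)"
    if "s \<in> insert t T" "J s \<subseteq> K" for s K
    by (rule measurable_compose[OF measurable_restrict_subset[OF that(2)] insert.prems(3)[OF that(1)]])
  have merge_restrict: "restrict (merge I (J t) (x, y)) (J s) = restrict x (J s)" if "s \<in> T" for s x y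
    using that disj by (auto simp: restrict_def merge_def fun_eq_iff I_def)
  have "(\<integral>\<^sup>+x. (\<Prod>s\<in>insert t T. f s (restrict x (J s))) \<partial>PiM (I \<union> J t) M)
     = (\<integral>\<^sup>+x. (\<integral>\<^sup>+y. (\<Prod>s\<in>insert t T. f s (restrict (merge I (J t) (x, y)) (J s))) \<partial>PiM (J t) M) \<partial>PiM I M)"
    by (rule product_nn_integral_fold[OF disj fin])
       (intro borel_measurable_prod_ennreal meas, auto simp: I_def)
  also have "\<dots> = (\<integral>\<^sup>+x. (\<integral>\<^sup>+y. f t (restrict y (J t)) * (\<Prod>s\<in>T. f s (restrict x (J s))) \<partial>PiM (J t) M) \<partial>PiM I M)"
    using insert.hyps disj by (simp add: merge_restrict)
  also have "\<dots> = (\<integral>\<^sup>+x. integral\<^sup>N (PiM (J t) M) (f t) * (\<Prod>s\<in>T. f s (restrict x (J s))) \<partial>PiM I M)"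
  proof (intro nn_integral_cong)
    have "(\<integral>\<^sup>+y. f t (restrict y (J t)) \<partial>PiM (J t) M) = integral\<^sup>N (PiM (J t) M) (f t)"
      by (intro nn_integral_cong) (auto simp: space_PiM)
    then show "(\<integral>\<^sup>+y. f t (restrict y (J t)) * c \<partial>PiM (J t) M) = integral\<^sup>N (PiM (J t) M) (f t) * c" for c
      by (subst nn_integral_multc) (auto intro: meas)
  qed
  also have "\<dots> = integral\<^sup>N (PiM (J t) M) (f t) * (\<integral>\<^sup>+x. (\<Prod>s\<in>T. f s (restrict x (J s))) \<partial>PiM I M)"
    by (rule nn_integral_cmult) (intro borel_measurable_prod_ennreal meas, auto simp: I_def)
  also have "(\<integral>\<^sup>+x. (\<Prod>s\<in>T. f s (restrict x (J s))) \<partial>PiM I M) = (\<Prod>s\<in>T. integral\<^sup>N (PiM (J s) M) (f s))"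
    unfolding I_def using insert.prems by (intro insert.IH) (auto simp: disjoint_family_on_def)
  finally have "(\<integral>\<^sup>+x. (\<Prod>s\<in>insert t T. f s (restrict x (J s))) \<partial>PiM (I \<union> J t) M)
      = integral\<^sup>N (PiM (J t) M) (f t) * (\<Prod>s\<in>T. integral\<^sup>N (PiM (J s) M) (f s))" .
  then show ?case unfolding U by (simp only: prod.insert[OF insert.hyps])
qed

lemma nn_integral_PiM_union_le:
  assumes "product_sigma_finite M" and "prob_space (PiM I M)"
    and "I \<inter> J = {}" "finite I" "finite J" and "F \<in> borel_measurable (PiM (I \<union> J) M)"
    and "\<And>u. u \<in> space (PiM I M) \<Longrightarrow> (\<integral>\<^sup>+v. F (merge I J (u, v)) \<partial>PiM J M) \<le> C"
  shows "integral\<^sup>N (PiM (I \<union> J) M) F \<le> C"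
proof -
  interpret product_sigma_finite M by (rule assms(1))
  have "integral\<^sup>N (PiM (I \<union> J) M) F = (\<integral>\<^sup>+u. (\<integral>\<^sup>+v. F (merge I J (u, v)) \<partial>PiM J M) \<partial>PiM I M)"
    using assms(3-6) by (rule product_nn_integral_fold)
  also have "\<dots> \<le> (\<integral>\<^sup>+u. C \<partial>PiM I M)"
    using assms(7) by (rule nn_integral_mono)
  also have "\<dots> = C"
    using prob_space.emeasure_space_1[OF assms(2)] by simp
  finally show ?thesis .
qed

lemma emeasure_le_exp_nn_integral:
  fixes g :: "'a \<Rightarrow> real" and h :: "'a \<Rightarrow> ennreal"
  assumes "A \<in> sets M" and "h \<in> borel_measurable M" and "0 \<le> l"
    and "\<And>x. x \<in> A \<Longrightarrow> t < g x \<and> ennreal (exp (l * g x)) \<le> h x"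
  shows "emeasure M A \<le> ennreal (exp (- l * t)) * integral\<^sup>N M h"
proof -
  have "indicator A x \<le> ennreal (exp (- l * t)) * h x" for x
  proof (cases "x \<in> A")
    case True
    have "l * t \<le> l * g x"
      using assms(3) assms(4)[OF True] by (intro mult_left_mono) auto
    then have "1 \<le> exp (- l * t) * exp (l * g x)"
      by (simp add: exp_add[symmetric])
    then have "ennreal 1 \<le> ennreal (exp (- l * t) * exp (l * g x))"
      by (rule ennreal_leI)
    also have "\<dots> = ennreal (exp (- l * t)) * ennreal (exp (l * g x))"
      by (rule ennreal_mult) simp_all
    also have "\<dots> \<le> ennreal (exp (- l * t)) * h x"
      using assms(4)[OF True] by (intro mult_left_mono) auto
    finally show ?thesis using True by simp
  qed simp
  then have "(\<integral>\<^sup>+x. indicator A x \<partial>M) \<le> (\<integral>\<^sup>+x. ennreal (exp (- l * t)) * h x \<partial>M)"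
    by (intro nn_integral_mono)
  then have "emeasure M A \<le> (\<integral>\<^sup>+x. ennreal (exp (- l * t)) * h x \<partial>M)"
    using assms(1) by simp
  also have "\<dots> = ennreal (exp (- l * t)) * integral\<^sup>N M h"
    using assms(2) by (rule nn_integral_cmult)
  finally show ?thesis .
qed

lemma exp_sum_le_prod_avg_exp:
  fixes X :: "nat \<Rightarrow> nat \<Rightarrow> real"
  assumes "0 < d"
  shows "exp (l * (\<Sum>i<d. \<Sum>j<d. X i j)) \<le> (\<Prod>j<d. (1 / d) * (\<Sum>i<d. exp (d * l * X i j)))"
proof -
  have "exp (l * (\<Sum>i<d. \<Sum>j<d. X i j)) = (\<Prod>j<d. exp (\<Sum>i<d. (1 / d) *\<^sub>R (d * l * X i j)))"
    using assms by (subst sum.swap) (simp add: exp_sum sum_distrib_left)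
  also have "\<dots> \<le> (\<Prod>j<d. (1 / d) * (\<Sum>i<d. exp (d * l * X i j)))"
  proof (intro prod_mono conjI)
    fix j
    have "exp (\<Sum>i<d. (1 / d) *\<^sub>R (d * l * X i j)) \<le> (\<Sum>i<d. (1 / d) * exp (d * l * X i j))"
      using assms by (intro convex_on_sum[OF _ _ exp_convex]) auto
    then show "exp (\<Sum>i<d. (1 / d) *\<^sub>R (d * l * X i j)) \<le> (1 / d) * (\<Sum>i<d. exp (d * l * X i j))"
      by (simp add: sum_distrib_left)
  qed auto
  finally show ?thesis .
qed

lemma inverse_sqrt_one_minus_power_le_exp:
  fixes x :: real
  assumes "0 \<le> x" "x \<le> 1 / 2"
  shows "(1 / sqrt (1 - x)) ^ m \<le> exp (m * (x + 2 * x\<^sup>2) / 2)"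
proof -
  have "sqrt (1 - x) = exp (ln (1 - x) / 2)"
    using assms by (simp add: sqrt_def root_powr_inverse powr_def)
  then have "1 / sqrt (1 - x) = exp (- ln (1 - x) / 2)"
    by (simp add: exp_minus field_simps)
  then have "(1 / sqrt (1 - x)) ^ m = exp (m * (- ln (1 - x) / 2))"
    by (simp only: exp_of_nat_mult)
  also have "\<dots> \<le> exp (m * (x + 2 * x\<^sup>2) / 2)"
  proof -
    have "real m * (- x - 2 * x\<^sup>2) \<le> real m * ln (1 - x)"
      by (intro mult_left_mono ln_one_minus_pos_lower_bound assms) auto
    then show ?thesis by (simp add: algebra_simps)
  qed
  finally show ?thesis .
qed

definition row_sqnorm_U :: "nat \<Rightarrow> ((bool \<times> nat \<times> nat) \<Rightarrow> real) \<Rightarrow> nat \<Rightarrow> real" where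
  "row_sqnorm_U n x i = (\<Sum>k<n. (matU x i k)\<^sup>2)"

definition frob_sq_UVt :: "nat \<Rightarrow> nat \<Rightarrow> ((bool \<times> nat \<times> nat) \<Rightarrow> real) \<Rightarrow> real" where
  "frob_sq_UVt d n x = (\<Sum>i<d. \<Sum>j<d. (\<Sum>k<n. matU x i k * matV x j k)\<^sup>2)"

lemma frob_UVt_eq_sqrt: "frob_UVt d n x = sqrt (frob_sq_UVt d n x)"
  by (simp add: frob_UVt_def frob_sq_UVt_def)

lemma measurable_row_sqnorm_U [measurable]:
  "(\<lambda>x. row_sqnorm_U n x i) \<in> borel_measurable (PiM I (\<lambda>_. normal_measure \<sigma>))"
  unfolding row_sqnorm_U_def matU_def by measurable

lemma measurable_frob_sq_UVt [measurable]:
  "frob_sq_UVt d n \<in> borel_measurable (PiM I (\<lambda>_. normal_measure \<sigma>))"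
  unfolding frob_sq_UVt_def matU_def matV_def by measurable

lemma finite_gidx [simp]: "finite (gidx d n)"
  by (simp add: gidx_def)

lemma prob_space_gauss_UV: "0 < d \<Longrightarrow> prob_space (gauss_UV d n)"
  unfolding gauss_UV_def by (rule prob_space_PiM_normal_measure) simp

lemma emeasure_row_sqnorm_U_gt:
  assumes "0 < d" "i < d" "0 \<le> \<mu>" "2 * \<mu> / d < 1"
  shows "emeasure (gauss_UV d n) {x \<in> space (gauss_UV d n). r < row_sqnorm_U n x i}
       \<le> ennreal (exp (- \<mu> * r) * (1 / sqrt (1 - 2 * \<mu> / d)) ^ n)"
proof -
  define R where "R = (\<lambda>k. (False, i, k)) ` {..<n}"
  have R: "R \<subseteq> gidx d n" "card R = n"
    using assms(2) by (auto simp: R_def gidx_def card_image inj_on_def)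
  have row: "row_sqnorm_U n x i = (\<Sum>\<iota>\<in>R. (x \<iota>)\<^sup>2)" for x
    unfolding R_def row_sqnorm_U_def matU_def by (subst sum.reindex) (auto simp: inj_on_def)
  have "emeasure (gauss_UV d n) {x \<in> space (gauss_UV d n). r < row_sqnorm_U n x i}
      \<le> ennreal (exp (- \<mu> * r)) * (\<integral>\<^sup>+x. ennreal (exp (\<mu> * row_sqnorm_U n x i)) \<partial>gauss_UV d n)"
    using assms(3) by (intro emeasure_le_exp_nn_integral) (auto simp: gauss_UV_def)
  also have "(\<integral>\<^sup>+x. ennreal (exp (\<mu> * row_sqnorm_U n x i)) \<partial>gauss_UV d n)
      = ennreal ((1 / sqrt (1 - 2 * \<mu> / d)) ^ n)"
    using R assms(1,4) unfolding row gauss_UV_def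
    by (subst nn_integral_PiM_normal_exp_sum_squares) (auto simp: power_divide)
  finally show ?thesis
    using assms(4) by (simp add: ennreal_mult)
qed

lemma prob_row_sqnorm_U_gt:
  assumes "0 < d" "i < d" "0 < e" "e \<le> 1"
  shows "measure (gauss_UV d n) {x \<in> space (gauss_UV d n). (1 + e) * n / d < row_sqnorm_U n x i}
       \<le> exp (- (n * e\<^sup>2 / 16))"
proof -
  define \<mu> where "\<mu> = e / 8 * d"
  have \<mu>: "0 \<le> \<mu>" "2 * \<mu> / d = e / 4" using assms by (auto simp: \<mu>_def)
  have "exp (- \<mu> * ((1 + e) * n / d)) * (1 / sqrt (1 - 2 * \<mu> / d)) ^ n
      \<le> exp (- \<mu> * ((1 + e) * n / d)) * exp (n * (e / 4 + 2 * (e / 4)\<^sup>2) / 2)"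
    unfolding \<mu>(2) using assms(3,4) by (intro mult_left_mono inverse_sqrt_one_minus_power_le_exp) auto
  also have "\<dots> = exp (- (n * e\<^sup>2 / 16))"
    using assms(1) by (simp add: \<mu>_def flip: exp_add) (simp add: field_simps power2_eq_square)
  finally have "emeasure (gauss_UV d n) {x \<in> space (gauss_UV d n). (1 + e) * n / d < row_sqnorm_U n x i}
      \<le> ennreal (exp (- (n * e\<^sup>2 / 16)))"
    using \<mu> assms(3,4) by (intro order.trans[OF emeasure_row_sqnorm_U_gt[OF assms(1,2)] ennreal_leI]) auto
  then show ?thesis
    by (simp add: measure_def enn2real_leI)
qed

definition frob_exp_majorant :: "nat \<Rightarrow> nat \<Rightarrow> real \<Rightarrow> ((bool \<times> nat \<times> nat) \<Rightarrow> real) \<Rightarrow> real" where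
  "frob_exp_majorant d n l x = (\<Prod>j<d. (1 / d) * (\<Sum>i<d. exp (d * l * (\<Sum>k<n. matU x i k * matV x j k)\<^sup>2)))"

lemma measurable_frob_exp_majorant [measurable]:
  "frob_exp_majorant d n l \<in> borel_measurable (PiM I (\<lambda>_. normal_measure \<sigma>))"
  unfolding frob_exp_majorant_def matU_def matV_def by measurable

lemma exp_frob_sq_UVt_le_majorant:
  "0 < d \<Longrightarrow> exp (l * frob_sq_UVt d n x) \<le> frob_exp_majorant d n l x"
  unfolding frob_sq_UVt_def frob_exp_majorant_def by (rule exp_sum_le_prod_avg_exp)

lemma nn_integral_exp_square_row_product:
  assumes "0 < d" "0 \<le> l" "2 * l * row_sqnorm_U n u i < 1"
  shows "(\<integral>\<^sup>+w. ennreal (exp (d * l * (\<Sum>k<n. matU u i k * matV w j k)\<^sup>2))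
            \<partial>PiM ({True} \<times> {j} \<times> {..<n}) (\<lambda>_. normal_measure (1 / sqrt d)))
       = ennreal (1 / sqrt (1 - 2 * l * row_sqnorm_U n u i))"
proof -
  define J where "J = {True} \<times> {j} \<times> {..<n}"
  define a where "a = (\<lambda>\<iota> :: bool \<times> nat \<times> nat. matU u i (snd (snd \<iota>)))"
  have J: "J = (\<lambda>k. (True, j, k)) ` {..<n}" by (auto simp: J_def)
  have lin: "(\<Sum>k<n. matU u i k * matV w j k) = (\<Sum>\<iota>\<in>J. a \<iota> * w \<iota>)" for w
    unfolding J a_def matV_def by (subst sum.reindex) (auto simp: inj_on_def)
  have sq: "2 * (d * l) * (1 / sqrt d)\<^sup>2 * (\<Sum>\<iota>\<in>J. (a \<iota>)\<^sup>2) = 2 * l * row_sqnorm_U n u i"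
    unfolding J a_def row_sqnorm_U_def using assms(1)
    by (subst sum.reindex) (auto simp: inj_on_def power_divide)
  have "(\<integral>\<^sup>+w. ennreal (exp (d * l * (\<Sum>k<n. matU u i k * matV w j k)\<^sup>2))
          \<partial>PiM J (\<lambda>_. normal_measure (1 / sqrt d)))
      = ennreal (1 / sqrt (1 - 2 * (d * l) * (1 / sqrt d)\<^sup>2 * (\<Sum>\<iota>\<in>J. (a \<iota>)\<^sup>2)))"
    unfolding lin
    by (rule nn_integral_PiM_normal_exp_square_linear, unfold sq) (use assms in \<open>auto simp: J_def\<close>)
  from this[unfolded sq] show ?thesis unfolding J_def .
qed

lemma nn_integral_row_avg_exp_le:
  assumes "0 < d" "0 \<le> l" "2 * l * r < 1" "\<forall>i<d. row_sqnorm_U n u i \<le> r"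
  shows "(\<integral>\<^sup>+w. ennreal ((1 / d) * (\<Sum>i<d. exp (d * l * (\<Sum>k<n. matU u i k * matV w j k)\<^sup>2)))
            \<partial>PiM ({True} \<times> {j} \<times> {..<n}) (\<lambda>_. normal_measure (1 / sqrt d)))
       \<le> ennreal (1 / sqrt (1 - 2 * l * r))"
proof -
  define P where "P = PiM ({True} \<times> {j} \<times> {..<n}) (\<lambda>_. normal_measure (1 / sqrt d))"
  have row_integral: "(\<integral>\<^sup>+w. ennreal (exp (d * l * (\<Sum>k<n. matU u i k * matV w j k)\<^sup>2)) \<partial>P)
      \<le> ennreal (1 / sqrt (1 - 2 * l * r))" if "i < d" for i
  proof -
    have "2 * l * row_sqnorm_U n u i \<le> 2 * l * r"
      using assms(2,4) that by (simp add: mult_left_mono)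
    then show ?thesis
      unfolding P_def using assms(1-3)
      by (subst nn_integral_exp_square_row_product) (auto intro!: ennreal_leI divide_left_mono)
  qed
  have "(\<integral>\<^sup>+w. ennreal ((1 / d) * (\<Sum>i<d. exp (d * l * (\<Sum>k<n. matU u i k * matV w j k)\<^sup>2))) \<partial>P)
      = (\<integral>\<^sup>+w. ennreal (1 / d) * (\<Sum>i<d. ennreal (exp (d * l * (\<Sum>k<n. matU u i k * matV w j k)\<^sup>2))) \<partial>P)"
    by (intro nn_integral_cong, subst ennreal_mult) (auto intro: sum_nonneg)
  also have "\<dots> = ennreal (1 / d) * (\<Sum>i<d. \<integral>\<^sup>+w. ennreal (exp (d * l * (\<Sum>k<n. matU u i k * matV w j k)\<^sup>2)) \<partial>P)"
    unfolding P_def matU_def matV_def by (simp add: nn_integral_cmult nn_integral_sum del: sum_ennreal)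
  also have "\<dots> \<le> ennreal (1 / d) * (\<Sum>i<d. ennreal (1 / sqrt (1 - 2 * l * r)))"
    by (intro mult_left_mono sum_mono row_integral) auto
  also have "\<dots> = ennreal (1 / sqrt (1 - 2 * l * r))"
  proof -
    have "ennreal (1 / d) * ennreal d = 1"
      using assms(1) by (simp flip: ennreal_mult)
    then show ?thesis by (simp add: ennreal_of_nat_eq_real_of_nat mult.assoc[symmetric])
  qed
  finally show ?thesis unfolding P_def .
qed

lemma nn_integral_V_frob_exp_majorant_le:
  assumes "0 < d" "0 \<le> l" "2 * l * r < 1" "\<forall>i<d. row_sqnorm_U n u i \<le> r"
  shows "(\<integral>\<^sup>+v. ennreal (\<Prod>j<d. (1 / d) * (\<Sum>i<d. exp (d * l * (\<Sum>k<n. matU u i k * matV v j k)\<^sup>2)))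
            \<partial>PiM ({True} \<times> {..<d} \<times> {..<n}) (\<lambda>_. normal_measure (1 / sqrt d)))
       \<le> ennreal ((1 / sqrt (1 - 2 * l * r)) ^ d)"
proof -
  define B where "B j = {True} \<times> {j} \<times> {..<n}" for j :: nat
  define h where "h j w = ennreal ((1 / d) * (\<Sum>i<d. exp (d * l * (\<Sum>k<n. matU u i k * matV w j k)\<^sup>2)))"
    for j w
  have V: "{True} \<times> {..<d} \<times> {..<n} = (\<Union>j<d. B j)" by (auto simp: B_def)
  have "(\<integral>\<^sup>+v. ennreal (\<Prod>j<d. (1 / d) * (\<Sum>i<d. exp (d * l * (\<Sum>k<n. matU u i k * matV v j k)\<^sup>2)))
            \<partial>PiM ({True} \<times> {..<d} \<times> {..<n}) (\<lambda>_. normal_measure (1 / sqrt d)))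
      = (\<integral>\<^sup>+v. (\<Prod>j<d. h j (restrict v (B j))) \<partial>PiM (\<Union>j<d. B j) (\<lambda>_. normal_measure (1 / sqrt d)))"
    unfolding V h_def
    by (intro nn_integral_cong) (simp add: prod_ennreal sum_nonneg matV_def B_def)
  also have "\<dots> = (\<Prod>j<d. integral\<^sup>N (PiM (B j) (\<lambda>_. normal_measure (1 / sqrt d))) (h j))"
    using assms(1)
    by (intro nn_integral_PiM_prod_blocks product_sigma_finite_normal_measure)
       (auto simp: B_def h_def disjoint_family_on_def matU_def matV_def)
  also have "\<dots> \<le> (\<Prod>j<d. ennreal (1 / sqrt (1 - 2 * l * r)))"
    unfolding B_def h_def using assms by (intro prod_mono_ennreal nn_integral_row_avg_exp_le)
  also have "\<dots> = ennreal ((1 / sqrt (1 - 2 * l * r)) ^ d)"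
    using assms(3) by (simp add: ennreal_power)
  finally show ?thesis .
qed

lemma row_sqnorm_U_merge:
  "i < d \<Longrightarrow> row_sqnorm_U n (merge ({False} \<times> {..<d} \<times> {..<n}) J (u, v)) i = row_sqnorm_U n u i"
  by (simp add: row_sqnorm_U_def matU_def merge_def)

lemma frob_exp_majorant_merge:
  "frob_exp_majorant d n l (merge ({False} \<times> {..<d} \<times> {..<n}) ({True} \<times> {..<d} \<times> {..<n}) (u, v))
     = (\<Prod>j<d. (1 / d) * (\<Sum>i<d. exp (d * l * (\<Sum>k<n. matU u i k * matV v j k)\<^sup>2)))"
  by (simp add: frob_exp_majorant_def matU_def matV_def merge_def)

lemma emeasure_frob_sq_UVt_gt_rows_le:
  assumes "0 < d" "0 \<le> l" "2 * l * r < 1"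
  shows "emeasure (gauss_UV d n)
           {x \<in> space (gauss_UV d n). (\<forall>i<d. row_sqnorm_U n x i \<le> r) \<and> t < frob_sq_UVt d n x}
       \<le> ennreal (exp (- l * t) * (1 / sqrt (1 - 2 * l * r)) ^ d)"
proof -
  define N where "N = normal_measure (1 / sqrt d)"
  define IU where "IU = {False} \<times> {..<d} \<times> {..<n}"
  define IV where "IV = {True} \<times> {..<d} \<times> {..<n}"
  define rows_le where "rows_le x \<longleftrightarrow> (\<forall>i<d. row_sqnorm_U n x i \<le> r)" for x
  define h where "h x = ennreal (frob_exp_majorant d n l x) * indicator {x. rows_le x} x" for x
  have G: "gauss_UV d n = PiM (IU \<union> IV) (\<lambda>_. N)"
    unfolding gauss_UV_def gidx_def IU_def IV_def N_def by (rule arg_cong2[where f = PiM]) auto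
  have h_meas: "h \<in> borel_measurable (PiM I (\<lambda>_. N))" for I
    unfolding h_def rows_le_def N_def by measurable
  have "emeasure (gauss_UV d n) {x \<in> space (gauss_UV d n). rows_le x \<and> t < frob_sq_UVt d n x}
      \<le> ennreal (exp (- l * t)) * integral\<^sup>N (gauss_UV d n) h"
    using assms(1,2) exp_frob_sq_UVt_le_majorant[OF assms(1)] unfolding G
    by (intro emeasure_le_exp_nn_integral h_meas) (auto simp: h_def rows_le_def N_def intro: ennreal_leI)
  also have "integral\<^sup>N (gauss_UV d n) h \<le> ennreal ((1 / sqrt (1 - 2 * l * r)) ^ d)"
    unfolding G
  proof (rule nn_integral_PiM_union_le)
    fix u
    have h_merge: "h (merge IU IV (u, v)) = (if rows_le u
        then ennreal (\<Prod>j<d. (1 / d) * (\<Sum>i<d. exp (d * l * (\<Sum>k<n. matU u i k * matV v j k)\<^sup>2)))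
        else 0)" for v
      unfolding h_def IU_def IV_def frob_exp_majorant_merge
      by (simp add: rows_le_def row_sqnorm_U_merge indicator_def)
    show "(\<integral>\<^sup>+v. h (merge IU IV (u, v)) \<partial>PiM IV (\<lambda>_. N)) \<le> ennreal ((1 / sqrt (1 - 2 * l * r)) ^ d)"
    proof (cases "rows_le u")
      case True
      then show ?thesis
        unfolding h_merge using nn_integral_V_frob_exp_majorant_le[OF assms, of n u]
        by (simp add: IV_def N_def rows_le_def)
    qed (simp add: h_merge)
  qed (use assms(1) in \<open>simp_all add: IU_def IV_def N_def product_sigma_finite_normal_measure
         prob_space_PiM_normal_measure h_meas[unfolded N_def]\<close>, auto)
  finally show ?thesis
    using assms(3) by (simp add: rows_le_def ennreal_mult mult_left_mono)
qed

lemma prob_frob_sq_UVt_gt_rows_le: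
  assumes "0 < d" "0 < n" "0 < e" "e \<le> 1"
  shows "measure (gauss_UV d n) {x \<in> space (gauss_UV d n).
           (\<forall>i<d. row_sqnorm_U n x i \<le> (1 + e) * n / d) \<and> (1 + e)\<^sup>2 * n < frob_sq_UVt d n x}
       \<le> exp (- (d * e\<^sup>2 / 16))"
proof -
  define r where "r = (1 + e) * n / d"
  have r: "0 < r" using assms by (simp add: r_def)
  define l where "l = e / (8 * r)"
  have l: "0 \<le> l" "2 * l * r = e / 4" using assms(3) r by (auto simp: l_def)
  have lr: "2 * l * r < 1" using l(2) assms(4) by simp
  have "exp (- l * ((1 + e)\<^sup>2 * n)) * (1 / sqrt (1 - 2 * l * r)) ^ d
      \<le> exp (- l * ((1 + e)\<^sup>2 * n)) * exp (d * (e / 4 + 2 * (e / 4)\<^sup>2) / 2)"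
    unfolding l(2) using assms(3,4) by (intro mult_left_mono inverse_sqrt_one_minus_power_le_exp) auto
  also have "\<dots> = exp (- (d * e\<^sup>2 / 16))"
  proof -
    have "l * ((1 + e)\<^sup>2 * n) = e * (1 + e) * d / 8"
      using assms(1) r by (simp add: l_def r_def field_simps power2_eq_square)
    then show ?thesis
      by (simp flip: exp_add) (simp add: field_simps power2_eq_square)
  qed
  finally have "emeasure (gauss_UV d n) {x \<in> space (gauss_UV d n).
           (\<forall>i<d. row_sqnorm_U n x i \<le> r) \<and> (1 + e)\<^sup>2 * n < frob_sq_UVt d n x}
      \<le> ennreal (exp (- (d * e\<^sup>2 / 16)))"
    by (rule order.trans[OF emeasure_frob_sq_UVt_gt_rows_le[OF assms(1) l(1) lr] ennreal_leI])
  then show ?thesis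
    unfolding r_def by (simp add: measure_def enn2real_leI)
qed

lemma frob_UVt_le_iff:
  assumes "0 \<le> a"
  shows "frob_UVt d n x \<le> a * sqrt n \<longleftrightarrow> frob_sq_UVt d n x \<le> a\<^sup>2 * n"
proof -
  have "a * sqrt n = sqrt (a\<^sup>2 * n)" using assms by (simp add: real_sqrt_mult)
  then show ?thesis by (simp add: frob_UVt_eq_sqrt)
qed

lemma prob_frob_UVt_le:
  assumes "0 < d" "0 < n" "0 < e" "e \<le> 1" "1 + e \<le> a"
  shows "1 - (d * exp (- (n * e\<^sup>2 / 16)) + exp (- (d * e\<^sup>2 / 16)))
       \<le> measure (gauss_UV d n) {x \<in> space (gauss_UV d n). frob_UVt d n x \<le> a * sqrt n}"
proof -
  interpret prob_space "gauss_UV d n" using assms(1) by (rule prob_space_gauss_UV)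
  define r where "r = (1 + e) * n / d"
  define good where "good = {x \<in> space (gauss_UV d n). frob_UVt d n x \<le> a * sqrt n}"
  define row_bad where "row_bad i = {x \<in> space (gauss_UV d n). r < row_sqnorm_U n x i}" for i
  define frob_bad where "frob_bad = {x \<in> space (gauss_UV d n).
      (\<forall>i<d. row_sqnorm_U n x i \<le> r) \<and> (1 + e)\<^sup>2 * n < frob_sq_UVt d n x}"
  have events: "good \<in> events" "row_bad i \<in> events" "frob_bad \<in> events" for i
    unfolding good_def row_bad_def frob_bad_def gauss_UV_def frob_UVt_eq_sqrt by measurable
  have "space (gauss_UV d n) - good \<subseteq> (\<Union>i<d. row_bad i) \<union> frob_bad"
  proof
    fix x assume x: "x \<in> space (gauss_UV d n) - good"
    then have "a\<^sup>2 * n < frob_sq_UVt d n x"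
      using frob_UVt_le_iff[of a d n x] assms(3,5) by (auto simp: good_def)
    moreover have "(1 + e)\<^sup>2 * n \<le> a\<^sup>2 * n"
      using assms(3,5) by (intro mult_right_mono power_mono) auto
    ultimately have "(1 + e)\<^sup>2 * n < frob_sq_UVt d n x" by linarith
    with x show "x \<in> (\<Union>i<d. row_bad i) \<union> frob_bad"
      by (cases "\<forall>i<d. row_sqnorm_U n x i \<le> r") (auto simp: row_bad_def frob_bad_def not_le)
  qed
  then have "prob (space (gauss_UV d n) - good) \<le> prob ((\<Union>i<d. row_bad i) \<union> frob_bad)"
    using events by (intro finite_measure_mono) auto
  also have "\<dots> \<le> (\<Sum>i<d. prob (row_bad i)) + prob frob_bad"
    using events
    by (intro order.trans[OF measure_Un_le] add_right_mono finite_measure_subadditive_finite) auto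
  also have "\<dots> \<le> d * exp (- (n * e\<^sup>2 / 16)) + exp (- (d * e\<^sup>2 / 16))"
    using sum_mono[of "{..<d}" "\<lambda>i. prob (row_bad i)" "\<lambda>_. exp (- (n * e\<^sup>2 / 16))"]
      prob_row_sqnorm_U_gt[OF assms(1) _ assms(3,4)] prob_frob_sq_UVt_gt_rows_le[OF assms(1-4)]
    unfolding row_bad_def frob_bad_def r_def by (intro add_mono) auto
  finally have "prob (space (gauss_UV d n) - good) \<le> d * exp (- (n * e\<^sup>2 / 16)) + exp (- (d * e\<^sup>2 / 16))" .
  then show ?thesis
    using prob_compl[OF events(1)] unfolding good_def[symmetric] by linarith
qed

lemma ln_le_two_sqrt: "0 < x \<Longrightarrow> ln x \<le> 2 * sqrt x"
  using ln_le_minus_one[of "sqrt x"] by (simp add: ln_sqrt)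

lemma linear_le_of_sq_div_ln_le:
  fixes c d m B :: real
  assumes "0 < c" "1 < d" "(2 * B / c)\<^sup>2 \<le> d" "c * d\<^sup>2 / ln d \<le> m"
  shows "B * d \<le> m"
proof -
  have "2 * B / c \<le> sqrt d"
    using assms(3) real_le_rsqrt by blast
  then have "B * d \<le> c * d * sqrt d / 2"
    using assms(1,2) by (simp add: field_simps mult_right_mono)
  also have "\<dots> = c * d\<^sup>2 / (2 * sqrt d)"
    using assms(2) by (simp add: field_simps power2_eq_square)
  also have "\<dots> \<le> c * d\<^sup>2 / ln d"
    using assms(1,2) ln_le_two_sqrt[of d] by (intro divide_left_mono) auto
  finally show ?thesis using assms(4) by linarith
qed

lemma exp_tail_sum_le:
  fixes d m e :: real
  assumes "0 < e" "32 / e\<^sup>2 \<le> d" "(64 + e\<^sup>2) * d \<le> m * e\<^sup>2"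
  shows "d * exp (- (m * e\<^sup>2 / 16)) + exp (- (d * e\<^sup>2 / 16)) \<le> exp (- (e\<^sup>2 / 32) * d)"
proof -
  define K where "K = e\<^sup>2 / 32 * d"
  have K: "1 \<le> K" using assms(1,2) by (simp add: K_def field_simps)
  have "0 < 32 / e\<^sup>2" using assms(1) by simp
  then have d: "0 < d" using assms(2) by linarith
  have "2 * d + K \<le> 4 * d + e\<^sup>2 / 16 * d"
    unfolding K_def using d by (intro add_mono mult_right_mono) auto
  also have "\<dots> = (64 + e\<^sup>2) * d / 16" by (simp add: algebra_simps)
  also have "\<dots> \<le> m * e\<^sup>2 / 16" using assms(3) by simp
  finally have "2 * d \<le> m * e\<^sup>2 / 16 - K" by simp
  then have "2 * d \<le> exp (m * e\<^sup>2 / 16 - K)"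
    using exp_ge_add_one_self[of "2 * d"] by (smt (verit) exp_le_cancel_iff)
  then have "2 * d * exp (- (m * e\<^sup>2 / 16)) \<le> exp (m * e\<^sup>2 / 16 - K) * exp (- (m * e\<^sup>2 / 16))"
    by (rule mult_right_mono) simp
  also have "\<dots> = exp (- K)" by (simp flip: exp_add)
  finally have row_part: "d * exp (- (m * e\<^sup>2 / 16)) \<le> exp (- K) / 2" by simp
  have "2 \<le> exp K" using exp_ge_add_one_self[of K] K by linarith
  then have "exp (- K) * 2 \<le> exp (- K) * exp K" by (intro mult_left_mono) auto
  then have "exp (- K) \<le> 1 / 2" by (simp flip: exp_add)
  then have "exp (- K) * exp (- K) \<le> exp (- K) * (1 / 2)" by (intro mult_left_mono) auto
  moreover have "exp (- (d * e\<^sup>2 / 16)) = exp (- K) * exp (- K)"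
    by (simp add: K_def flip: exp_add)
  moreover have "exp (- (e\<^sup>2 / 32) * d) = exp (- K)"
    by (simp add: K_def)
  ultimately show ?thesis using row_part by linarith
qed

theorem lemmaB1:
  fixes c \<epsilon> :: real
  assumes "c > 0" and "\<epsilon> > 0"
  shows "\<exists>K > 0. \<exists>d0::nat. \<forall>d \<ge> d0. \<forall>n::nat.
           real n \<ge> c * (real d)\<^sup>2 / ln (real d) \<longrightarrow>
           prob_space.prob (gauss_UV d n)
             {x \<in> space (gauss_UV d n). frob_UVt d n x \<le> (1 + \<epsilon>) * sqrt (real n)}
           \<ge> 1 - exp (- K * real d)"
proof -
  define e where "e = min \<epsilon> 1"
  have e: "0 < e" "e \<le> 1" "1 + e \<le> 1 + \<epsilon>" using assms(2) by (auto simp: e_def)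
  define B where "B = (64 + e\<^sup>2) / e\<^sup>2"
  define d0 where "d0 = nat \<lceil>(2 * B / c)\<^sup>2 + 32 / e\<^sup>2 + 2\<rceil>"
  show ?thesis
  proof (intro exI[of _ "e\<^sup>2 / 32"] conjI exI[of _ d0] allI impI)
    fix d n :: nat
    assume "d0 \<le> d" and n: "c * (real d)\<^sup>2 / ln (real d) \<le> real n"
    then have "(2 * B / c)\<^sup>2 + 32 / e\<^sup>2 + 2 \<le> d"
      using real_nat_ceiling_ge[of "(2 * B / c)\<^sup>2 + 32 / e\<^sup>2 + 2"] unfolding d0_def by linarith
    moreover have "0 \<le> (2 * B / c)\<^sup>2" "0 \<le> 32 / e\<^sup>2" by simp_all
    ultimately have d: "(2 * B / c)\<^sup>2 \<le> d" "32 / e\<^sup>2 \<le> d" "2 \<le> d" by linarith+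
    have Bdn: "B * d \<le> n"
      using linear_le_of_sq_div_ln_le[OF assms(1) _ d(1) n] d(3) by simp
    then have Bn: "(64 + e\<^sup>2) * d \<le> n * e\<^sup>2"
      using e(1) by (simp add: B_def field_simps)
    have "0 < B * d" using e(1) d(3) by (simp add: B_def add_pos_nonneg)
    with Bdn have "0 < n" by (simp add: of_nat_0_less_iff[symmetric] del: of_nat_0_less_iff)
    have "1 - exp (- (e\<^sup>2 / 32) * d) \<le> 1 - (d * exp (- (n * e\<^sup>2 / 16)) + exp (- (d * e\<^sup>2 / 16)))"
      using exp_tail_sum_le[OF e(1) d(2) Bn] by simp
    also have "\<dots> \<le> measure (gauss_UV d n) {x \<in> space (gauss_UV d n). frob_UVt d n x \<le> (1 + \<epsilon>) * sqrt n}"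
      using d(3) \<open>0 < n\<close> e by (intro prob_frob_UVt_le) auto
    finally show "1 - exp (- (e\<^sup>2 / 32) * d) \<le> prob_space.prob (gauss_UV d n)
        {x \<in> space (gauss_UV d n). frob_UVt d n x \<le> (1 + \<epsilon>) * sqrt n}" .
  qed (use e(1) in simp)
qed

end
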